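(* Let $H=\sum_{i,j=1}^n\left(\tfrac12\mu_{ij}p_ip_j+\tfrac12\kappa_{ij}q_iq_j+\tfrac12\gamma_{ij}p_iq_j+\tfrac12\gamma_{ji}q_ip_j\right)$, where $\mu,\kappa$ are real symmetric $n\times n$ matrices, $\gamma$ is a real $n\times n$ matrix, and $q_i,p_i$ are Hermitian operators with $[p_i,q_j]=-i\delta_{ij}$, $[p_i,p_j]=[q_i,q_j]=0$. Then $H$ is Dirac diagonalizable if and only if its dynamic matrix $D=\Sigma_yM$ is physically diagonalizable.
   Context: $M=\begin{pmatrix}\mu&\gamma\\ \gamma^T&\kappa\end{pmatrix}$ and $\Sigma_y=\begin{pmatrix}0&-iI_n\\ iI_n&0\end{pmatrix}$; with $\phi=(p_1,\dots,p_n,q_1,\dots,q_n)^T$ one has $H=\tfrac12\phi^\dagger M\phi$ and $[\phi_\mu,H]=\sum_\nu D_{\mu\nu}\phi_\nu$. $H$ is Dirac diagonalizable if there exist operators $d_1,\dots,d_n$, each a complex linear combination of $p_1,\dots,p_n,q_1,\dots,q_n$, satisfying $[d_i,d_j^\dagger]=\delta_{ij}$, $[d_i,d_j]=0$, and real numbers $\omega_1,\dots,\omega_n,C$ such that $H=\sum_i\omega_id_i^\dagger d_i+C$. A matrix is physically diagonalizable if it is diagonalizable over $\mathbb{C}$ and all its eigenvalues are real. *)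

theory Defs
  imports "HOL-Analysis.Analysis"
begin

text \<open>Abstract operator algebra: a (nontrivial, since ring_1) ring 'a with complex
 scalars embedded centrally via emb, and an adjoint (dagger) adj.\<close>

definition star_algebra :: "(complex \<Rightarrow> 'a::ring_1) \<Rightarrow> ('a \<Rightarrow> 'a) \<Rightarrow> bool" where
  "star_algebra emb adj \<longleftrightarrow>
     emb 1 = 1 \<and>
     (\<forall>a b. emb (a + b) = emb a + emb b) \<and>
     (\<forall>a b. emb (a * b) = emb a * emb b) \<and>
     (\<forall>a x. emb a * x = x * emb a) \<and>
     (\<forall>x y. adj (x + y) = adj x + adj y) \<and>
     (\<forall>x y. adj (x * y) = adj y * adj x) \<and>
     (\<forall>x. adj (adj x) = x) \<and>
     (\<forall>a. adj (emb a) = emb (cnj a))"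

definition commutator :: "'a::ring \<Rightarrow> 'a \<Rightarrow> 'a" where
  "commutator x y = x * y - y * x"

definition canonical_pq ::
  "(complex \<Rightarrow> 'a::ring_1) \<Rightarrow> ('a \<Rightarrow> 'a) \<Rightarrow> ('n \<Rightarrow> 'a) \<Rightarrow> ('n \<Rightarrow> 'a) \<Rightarrow> bool" where
  "canonical_pq emb adj p q \<longleftrightarrow>
     (\<forall>i. adj (p i) = p i \<and> adj (q i) = q i) \<and>
     (\<forall>i j. commutator (p i) (q j) = emb (if i = j then - \<i> else 0)) \<and>
     (\<forall>i j. commutator (p i) (p j) = 0) \<and>
     (\<forall>i j. commutator (q i) (q j) = 0)"

definition phi :: "('n \<Rightarrow> 'a) \<Rightarrow> ('n \<Rightarrow> 'a) \<Rightarrow> 'n + 'n \<Rightarrow> 'a" where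
  "phi p q k = (case k of Inl i \<Rightarrow> p i | Inr i \<Rightarrow> q i)"

definition hamiltonian ::
  "(complex \<Rightarrow> 'a::ring_1) \<Rightarrow> ('n::finite \<Rightarrow> 'a) \<Rightarrow> ('n \<Rightarrow> 'a) \<Rightarrow>
   real^'n^'n \<Rightarrow> real^'n^'n \<Rightarrow> real^'n^'n \<Rightarrow> 'a" where
  "hamiltonian emb p q \<mu> \<kappa> \<gamma> =
     (\<Sum>i\<in>UNIV. \<Sum>j\<in>UNIV.
        emb (of_real (\<mu> $ i $ j / 2)) * p i * p j
      + emb (of_real (\<kappa> $ i $ j / 2)) * q i * q j
      + emb (of_real (\<gamma> $ i $ j / 2)) * p i * q j
      + emb (of_real (\<gamma> $ j $ i / 2)) * q i * p j)"

definition lin_comb ::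
  "(complex \<Rightarrow> 'a::ring_1) \<Rightarrow> ('n::finite \<Rightarrow> 'a) \<Rightarrow> ('n \<Rightarrow> 'a) \<Rightarrow> ('n + 'n \<Rightarrow> complex) \<Rightarrow> 'a" where
  "lin_comb emb p q c = (\<Sum>k\<in>UNIV. emb (c k) * phi p q k)"

definition dirac_diagonalizable ::
  "(complex \<Rightarrow> 'a::ring_1) \<Rightarrow> ('a \<Rightarrow> 'a) \<Rightarrow> ('n::finite \<Rightarrow> 'a) \<Rightarrow> ('n \<Rightarrow> 'a) \<Rightarrow> 'a \<Rightarrow> bool" where
  "dirac_diagonalizable emb adj p q H \<longleftrightarrow>
     (\<exists>(d :: 'n \<Rightarrow> 'a) (\<omega> :: 'n \<Rightarrow> real) (C :: real).
        (\<forall>i. \<exists>c. d i = lin_comb emb p q c) \<and>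
        (\<forall>i j. commutator (d i) (adj (d j)) = (if i = j then 1 else 0)) \<and>
        (\<forall>i j. commutator (d i) (d j) = 0) \<and>
        H = (\<Sum>i\<in>UNIV. emb (of_real (\<omega> i)) * adj (d i) * d i) + emb (of_real C))"

text \<open>M = [[mu, gamma],[gamma^T, kappa]] and Sigma_y = [[0,-iI],[iI,0]].\<close>
definition block_M :: "real^('n::finite)^'n \<Rightarrow> real^'n^'n \<Rightarrow> real^'n^'n \<Rightarrow> complex^('n + 'n)^('n + 'n)" where
  "block_M \<mu> \<kappa> \<gamma> = (\<chi> k l. of_real (case (k, l) of
       (Inl i, Inl j) \<Rightarrow> \<mu> $ i $ j
     | (Inl i, Inr j) \<Rightarrow> \<gamma> $ i $ j
     | (Inr i, Inl j) \<Rightarrow> \<gamma> $ j $ i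
     | (Inr i, Inr j) \<Rightarrow> \<kappa> $ i $ j))"

definition sigma_y :: "complex^('n::finite + 'n)^('n + 'n)" where
  "sigma_y = (\<chi> k l. case (k, l) of
       (Inl i, Inr j) \<Rightarrow> (if i = j then - \<i> else 0)
     | (Inr i, Inl j) \<Rightarrow> (if i = j then \<i> else 0)
     | _ \<Rightarrow> 0)"

definition dynamic_matrix :: "real^('n::finite)^'n \<Rightarrow> real^'n^'n \<Rightarrow> real^'n^'n \<Rightarrow> complex^('n + 'n)^('n + 'n)" where
  "dynamic_matrix \<mu> \<kappa> \<gamma> = sigma_y ** block_M \<mu> \<kappa> \<gamma>"

definition diagonalizable_C :: "complex^('m::finite)^'m \<Rightarrow> bool" where
  "diagonalizable_C A \<longleftrightarrow>
     (\<exists>P :: complex^'m^'m. invertible P \<and> (\<forall>i j. i \<noteq> j \<longrightarrow> (matrix_inv P ** A ** P) $ i $ j = 0))"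

definition physically_diagonalizable :: "complex^('m::finite)^'m \<Rightarrow> bool" where
  "physically_diagonalizable A \<longleftrightarrow>
     diagonalizable_C A \<and>
     (\<forall>e v. v \<noteq> 0 \<and> A *v v = e *s v \<longrightarrow> e \<in> \<real>)"

end

theory Submission
  imports Defs
begin

text \<open>
  The map \<open>L v = \<Sum>\<^sub>k v\<^sub>k \<phi>\<^sub>k\<close> embeds \<open>\<complex>\<^sup>2\<^sup>n\<close> injectively into the operator algebra; under it
  the commutator becomes the symplectic form \<open>\<omega>(u,v) = u\<^sup>T \<Sigma>\<^sub>y v\<close>, and commutation with \<open>H\<close>
  becomes the matrix \<open>A = D\<^sup>T\<close>: \<open>[L c, H] = L (A c)\<close>. Hence a Dirac diagonalisation
  \<open>d\<^sub>i = L c\<^sub>i\<close> is the same thing as a symplectic basis \<open>c\<^sub>1 .. c\<^sub>n, c\<^sub>1\<^sup>* .. c\<^sub>n\<^sup>*\<close>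
  (\<open>\<omega>(c\<^sub>i, c\<^sub>j\<^sup>*) = \<delta>\<^sub>i\<^sub>j\<close>, \<open>\<omega>(c\<^sub>i, c\<^sub>j) = 0\<close>) consisting of eigenvectors of \<open>A\<close> with real
  eigenvalues \<open>\<omega>\<^sub>i\<close> and \<open>-\<omega>\<^sub>i\<close>: given such a basis, \<open>H - \<Sum>\<^sub>i \<omega>\<^sub>i d\<^sub>i\<^sup>\<dagger> d\<^sub>i\<close> commutes with
  every \<open>\<phi>\<^sub>k\<close> and is therefore a scalar. Such a basis diagonalises \<open>D\<close> with real spectrum.

  Conversely, \<open>A\<close> is self-adjoint for the indefinite Hermitian form \<open>h(u,v) = \<omega>(u\<^sup>*, v)\<close>
  and anticommutes with complex conjugation. So if \<open>A\<close> has a real eigenbasis, the \<open>c\<^sub>i\<close>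
  can be chosen one at a time: an eigenvector \<open>h\<close>-orthogonal to the previous \<open>c\<^sub>i\<close> and
  \<open>c\<^sub>i\<^sup>*\<close> with \<open>h(c,c) \<noteq> 0\<close> always exists, since otherwise \<open>h\<close> would vanish on the whole
  complement by polarisation, contradicting nondegeneracy; it is normalised to
  \<open>h(c,c) = -1\<close>, replacing \<open>c\<close> by \<open>c\<^sup>*\<close> if necessary.
\<close>

lemma commutator_add_right: "commutator z (x + y) = commutator z x + commutator z (y::'a::ring)"
  by (simp add: commutator_def algebra_simps)

lemma commutator_diff_right: "commutator z (x - y) = commutator z x - commutator z (y::'a::ring)"
  by (simp add: commutator_def algebra_simps)

lemma commutator_sum_left: "commutator (sum f A) (z::'a::ring) = (\<Sum>x\<in>A. commutator (f x) z)"
  by (simp add: commutator_def sum_distrib_left sum_distrib_right sum_subtractf)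

lemma commutator_sum_right: "commutator (z::'a::ring) (sum f A) = (\<Sum>x\<in>A. commutator z (f x))"
  by (simp add: commutator_def sum_distrib_left sum_distrib_right sum_subtractf)

lemma commutator_mult_right:
  "commutator x (y * z) = commutator x y * z + y * commutator x (z::'a::ring)"
  by (simp add: commutator_def algebra_simps)

lemma commutator_antisym: "commutator x y = - commutator y (x::'a::ring)"
  by (simp add: commutator_def)

lemma sum_UNIV_Plus:
  "(\<Sum>k\<in>(UNIV::('n::finite + 'n) set). f k) = (\<Sum>i\<in>UNIV. f (Inl i)) + (\<Sum>i\<in>UNIV. f (Inr i))"
proof -
  have "(\<Sum>k\<in>(UNIV::('n + 'n) set). f k) = sum f (UNIV <+> UNIV)"
    by (simp only: UNIV_Plus_UNIV)
  also have "\<dots> = (\<Sum>i\<in>UNIV. f (Inl i)) + (\<Sum>i\<in>UNIV. f (Inr i))"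
    by (subst sum.Plus) (auto simp: comp_def)
  finally show ?thesis .
qed

lemma sigma_y_Inl_Inl [simp]: "sigma_y $ Inl i $ Inl j = 0"
  and sigma_y_Inr_Inr [simp]: "sigma_y $ Inr i $ Inr j = 0"
  and sigma_y_Inl_Inr [simp]: "sigma_y $ Inl i $ Inr j = (if i = j then - \<i> else 0)"
  and sigma_y_Inr_Inl [simp]: "sigma_y $ Inr i $ Inl j = (if i = j then \<i> else 0)"
  by (simp_all add: sigma_y_def)

lemma sigma_y_antisym: "(sigma_y :: complex^('n::finite + 'n)^('n + 'n)) $ l $ k = - sigma_y $ k $ l"
  by (cases k; cases l) auto

lemma mult_if_zero_right [simp]: "(a::complex) * (if P then x else 0) = (if P then a * x else 0)"
  and mult_if_zero_left [simp]: "(if P then x else 0) * (a::complex) = (if P then x * a else 0)"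
  by simp_all

definition vconj :: "complex^'m \<Rightarrow> complex^'m" where
  "vconj u = (\<chi> k. cnj (u$k))"

definition mconj :: "complex^'m^'k \<Rightarrow> complex^'m^'k" where
  "mconj B = (\<chi> i j. cnj (B$i$j))"

lemma vconj_nth [simp]: "vconj u $ k = cnj (u $ k)"
  by (simp add: vconj_def)

lemma vconj_vconj [simp]: "vconj (vconj u) = u"
  by (simp add: vec_eq_iff)

lemma vconj_add: "vconj (a + b) = vconj a + vconj b"
  and vconj_scale: "vconj (c *s a) = cnj c *s vconj a"
  and vconj_zero: "vconj 0 = 0"
  and vconj_minus: "vconj (- a) = - vconj a"
  and vconj_diff: "vconj (a - b) = vconj a - vconj b"
  by (simp_all add: vec_eq_iff)

lemma vconj_sum: "vconj (sum f A) = (\<Sum>x\<in>A. vconj (f x))"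
  by (induction A rule: infinite_finite_induct) (auto simp: vconj_zero vconj_add)

lemma mconj_mult: "mconj (X ** Y) = mconj X ** mconj Y"
  by (simp add: mconj_def matrix_matrix_mult_def vec_eq_iff)

lemma mconj_transpose: "mconj (transpose X) = transpose (mconj X)"
  by (simp add: mconj_def transpose_def vec_eq_iff)

lemma vconj_matrix_vector_mult: "vconj (B *v x) = mconj B *v vconj x"
  by (simp add: mconj_def matrix_vector_mult_def vec_eq_iff)

lemma matrix_minus_mult_left: "(- X) ** (Y::'a::comm_ring_1^_^_) = - (X ** Y)"
  by (simp add: matrix_matrix_mult_def vec_eq_iff sum_negf)

lemma matrix_minus_mult_right: "(X::'a::comm_ring_1^_^_) ** (- Y) = - (X ** Y)"
  by (simp add: matrix_matrix_mult_def vec_eq_iff sum_negf)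

lemma matrix_minus_vector_mult: "(- X) *v (v::'a::comm_ring_1^_) = - (X *v v)"
  by (simp add: matrix_vector_mult_def vec_eq_iff sum_negf)

lemma transpose_minus: "transpose (- X) = - transpose X"
  by (simp add: transpose_def vec_eq_iff)

lemma matrix_vector_mult_sum: "(B::complex^'m^'k) *v (sum f S) = (\<Sum>x\<in>S. B *v f x)"
  by (induction S rule: infinite_finite_induct) (auto simp: matrix_vector_right_distrib)

subsection \<open>The symplectic form\<close>

definition vdot :: "complex^'m \<Rightarrow> complex^'m \<Rightarrow> complex" where
  "vdot x y = (\<Sum>k\<in>UNIV. x$k * y$k)"

definition symp_form :: "complex^('n::finite + 'n) \<Rightarrow> complex^('n + 'n) \<Rightarrow> complex" where
  "symp_form u v = (\<Sum>k\<in>UNIV. \<Sum>l\<in>UNIV. u$k * sigma_y$k$l * v$l)"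

definition herm_form :: "complex^('n::finite + 'n) \<Rightarrow> complex^('n + 'n) \<Rightarrow> complex" where
  "herm_form u v = symp_form (vconj u) v"

lemma vdot_matrix_vector_mult: "vdot x (B *v y) = vdot (transpose B *v x) y"
proof -
  have "vdot x (B *v y) = (\<Sum>k\<in>UNIV. \<Sum>l\<in>UNIV. x$k * B$k$l * y$l)"
    by (simp add: vdot_def matrix_vector_mult_def sum_distrib_left mult.assoc)
  also have "\<dots> = (\<Sum>l\<in>UNIV. \<Sum>k\<in>UNIV. x$k * B$k$l * y$l)"
    by (rule sum.swap)
  also have "\<dots> = vdot (transpose B *v x) y"
    by (simp add: vdot_def matrix_vector_mult_def transpose_def sum_distrib_left
        sum_distrib_right mult_ac)
  finally show ?thesis .
qed

lemma vdot_minus_left: "vdot (- x) y = - vdot x y"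
  by (simp add: vdot_def sum_negf)

lemma symp_form_expand:
  "symp_form u v = (\<Sum>i\<in>UNIV. \<i> * (u$Inr i * v$Inl i) - \<i> * (u$Inl i * v$Inr i))"
  unfolding symp_form_def sum_UNIV_Plus by (simp add: sum_subtractf sum_negf mult_ac)

lemma symp_form_eq_vdot: "symp_form u v = vdot u (sigma_y *v v)"
  unfolding symp_form_def vdot_def matrix_vector_mult_def
  by (simp add: sum_distrib_left mult.assoc)

lemma symp_form_antisym: "symp_form u v = - symp_form v u"
  unfolding symp_form_expand by (simp add: sum_negf[symmetric] algebra_simps)

lemma symp_form_vconj: "symp_form (vconj u) (vconj v) = - cnj (symp_form u v)"
  unfolding symp_form_expand by (simp add: sum_negf[symmetric] algebra_simps)

lemma symp_form_add_left: "symp_form (a + b) v = symp_form a v + symp_form b v"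
  and symp_form_add_right: "symp_form v (a + b) = symp_form v a + symp_form v b"
  and symp_form_scale_left: "symp_form (c *s a) v = c * symp_form a v"
  and symp_form_scale_right: "symp_form v (c *s a) = c * symp_form v a"
  unfolding symp_form_expand
  by (simp_all add: sum.distrib[symmetric] sum_distrib_left algebra_simps)

lemma symp_form_zero_left: "symp_form 0 v = 0"
  and symp_form_zero_right: "symp_form v 0 = 0"
  and symp_form_minus_left: "symp_form (- a) v = - symp_form a v"
  and symp_form_diff_left: "symp_form (a - b) v = symp_form a v - symp_form b v"
  and symp_form_diff_right: "symp_form v (a - b) = symp_form v a - symp_form v b"
  unfolding symp_form_expand
  by (simp_all add: sum_negf[symmetric] sum_subtractf[symmetric] algebra_simps)

lemma symp_form_sum_left: "symp_form (sum f A) v = (\<Sum>x\<in>A. symp_form (f x) v)"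
  by (induction A rule: infinite_finite_induct) (auto simp: symp_form_zero_left symp_form_add_left)

lemma symp_form_sum_right: "symp_form v (sum f A) = (\<Sum>x\<in>A. symp_form v (f x))"
  by (induction A rule: infinite_finite_induct) (auto simp: symp_form_zero_right symp_form_add_right)

lemma symp_form_nondegenerate:
  assumes "\<And>x. symp_form x z = 0"
  shows "z = 0"
proof -
  have axis: "symp_form (axis k 1) z = (case k of Inl i \<Rightarrow> - \<i> * z$Inr i | Inr i \<Rightarrow> \<i> * z$Inl i)" for k
    unfolding symp_form_expand by (cases k) (auto simp: axis_def sum_negf)
  have "z$Inr i = 0" for i
    using assms[of "axis (Inl i) 1"] axis[of "Inl i"] by simp
  moreover have "z$Inl i = 0" for i
    using assms[of "axis (Inr i) 1"] axis[of "Inr i"] by simp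
  ultimately show ?thesis
    by (simp add: vec_eq_iff) (metis sum.exhaust)
qed

lemma herm_form_conj_sym: "herm_form u v = cnj (herm_form v u)"
  unfolding herm_form_def using symp_form_vconj[of "vconj v" u] symp_form_antisym[of v "vconj u"]
  by simp

lemma herm_form_vconj: "herm_form (vconj u) (vconj v) = - cnj (herm_form u v)"
  unfolding herm_form_def using symp_form_vconj[of "vconj u" v] by (simp only: vconj_vconj)

lemma herm_form_add_left: "herm_form (a + b) v = herm_form a v + herm_form b v"
  and herm_form_add_right: "herm_form v (a + b) = herm_form v a + herm_form v b"
  and herm_form_scale_left: "herm_form (c *s a) v = cnj c * herm_form a v"
  and herm_form_scale_right: "herm_form v (c *s a) = c * herm_form v a"
  and herm_form_minus_left: "herm_form (- a) v = - herm_form a v"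
  and herm_form_diff_left: "herm_form (a - b) v = herm_form a v - herm_form b v"
  and herm_form_diff_right: "herm_form v (a - b) = herm_form v a - herm_form v b"
  and herm_form_sum_left: "herm_form (sum f A) v = (\<Sum>x\<in>A. herm_form (f x) v)"
  and herm_form_sum_right: "herm_form v (sum f A) = (\<Sum>x\<in>A. herm_form v (f x))"
  by (simp_all add: herm_form_def vconj_add vconj_scale vconj_minus vconj_diff vconj_sum
      symp_form_add_left symp_form_add_right symp_form_scale_left symp_form_scale_right
      symp_form_minus_left symp_form_diff_left symp_form_diff_right
      symp_form_sum_left symp_form_sum_right)

lemma herm_form_nondegenerate: "(\<And>x. herm_form x z = 0) \<Longrightarrow> z = 0"
  unfolding herm_form_def by (metis symp_form_nondegenerate vconj_vconj)

lemma herm_form_self_real: "herm_form u u = complex_of_real (Re (herm_form u u))"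
  using herm_form_conj_sym[of u u] by (metis Reals_cnj_iff complex_is_Real_iff of_real_Re)

lemma herm_form_normalize:
  assumes "herm_form z z = complex_of_real t" "t < 0"
  shows "herm_form (complex_of_real (1 / sqrt (- t)) *s z) (complex_of_real (1 / sqrt (- t)) *s z) = -1"
proof -
  define s where "s = 1 / sqrt (- t)"
  have "s * s * t = -1"
    using assms(2) unfolding s_def by (simp add: field_simps)
  then show ?thesis
    unfolding s_def[symmetric] herm_form_scale_left herm_form_scale_right assms(1)
    by (simp flip: of_real_mult add: mult.assoc)
qed

lemma herm_form_polarization_zero:
  assumes "herm_form u u = 0" "herm_form v v = 0"
    and "herm_form (u + v) (u + v) = 0" "herm_form (u + \<i> *s v) (u + \<i> *s v) = 0"
  shows "herm_form u v = 0"
proof -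
  have sum0: "herm_form u v + herm_form v u = 0"
    using assms(1-3) by (simp add: herm_form_add_left herm_form_add_right add.commute)
  have "\<i> * (herm_form u v - herm_form v u) = 0"
    using assms(1,2,4)
    by (simp add: herm_form_add_left herm_form_add_right herm_form_scale_left
        herm_form_scale_right algebra_simps)
  then have "herm_form u v = herm_form v u" by simp
  with sum0 show ?thesis by simp
qed

subsection \<open>The matrix of commutation with the Hamiltonian\<close>

text \<open>\<open>[\<phi>, H] = D \<phi>\<close> makes \<open>c \<mapsto> [L c, H]\<close> the transposed matrix \<open>D\<^sup>T\<close> in the coordinates of \<open>L\<close>.\<close>

definition heisenberg_matrix ::
  "real^('n::finite)^'n \<Rightarrow> real^'n^'n \<Rightarrow> real^'n^'n \<Rightarrow> complex^('n + 'n)^('n + 'n)" where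
  "heisenberg_matrix \<mu> \<kappa> \<gamma> = transpose (dynamic_matrix \<mu> \<kappa> \<gamma>)"

lemma transpose_sigma_y: "transpose (sigma_y :: complex^('n::finite + 'n)^('n + 'n)) = - sigma_y"
  by (auto simp: vec_eq_iff transpose_def sigma_y_def split: sum.splits)

lemma mconj_sigma_y: "mconj (sigma_y :: complex^('n::finite + 'n)^('n + 'n)) = - sigma_y"
  by (auto simp: vec_eq_iff mconj_def sigma_y_def split: sum.splits)

lemma transpose_block_M:
  assumes "transpose \<mu> = \<mu>" "transpose \<kappa> = \<kappa>"
  shows "transpose (block_M \<mu> \<kappa> \<gamma>) = block_M \<mu> \<kappa> \<gamma>"
proof -
  have "\<mu>$j$i = \<mu>$i$j" "\<kappa>$j$i = \<kappa>$i$j" for i j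
    using assms by (metis transpose_def vec_lambda_beta)+
  then show ?thesis
    by (auto simp: vec_eq_iff transpose_def block_M_def split: sum.splits)
qed

lemma mconj_block_M: "mconj (block_M \<mu> \<kappa> \<gamma>) = block_M \<mu> \<kappa> \<gamma>"
  by (auto simp: vec_eq_iff mconj_def block_M_def split: sum.splits)

lemma heisenberg_matrix_vconj:
  "heisenberg_matrix \<mu> \<kappa> \<gamma> *v vconj v = - vconj (heisenberg_matrix \<mu> \<kappa> \<gamma> *v v)"
proof -
  have "mconj (heisenberg_matrix \<mu> \<kappa> \<gamma>) = - heisenberg_matrix \<mu> \<kappa> \<gamma>"
    by (simp add: heisenberg_matrix_def dynamic_matrix_def mconj_transpose mconj_mult
        mconj_sigma_y mconj_block_M matrix_minus_mult_left transpose_minus)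
  then show ?thesis
    by (simp add: vconj_matrix_vector_mult matrix_minus_vector_mult)
qed

text \<open>\<open>\<Sigma>\<^sub>y A = -\<Sigma>\<^sub>y M \<Sigma>\<^sub>y\<close> is symmetric.\<close>

lemma symp_form_heisenberg_matrix:
  fixes \<mu> \<kappa> \<gamma> :: "real^('n::finite)^'n"
  assumes "transpose \<mu> = \<mu>" "transpose \<kappa> = \<kappa>"
  shows "symp_form u (heisenberg_matrix \<mu> \<kappa> \<gamma> *v v) = - symp_form (heisenberg_matrix \<mu> \<kappa> \<gamma> *v u) v"
proof -
  let ?S = "sigma_y :: complex^('n + 'n)^('n + 'n)" and ?M = "block_M \<mu> \<kappa> \<gamma>"
    and ?A = "heisenberg_matrix \<mu> \<kappa> \<gamma>"
  have MT: "transpose ?M = ?M"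
    using transpose_block_M[OF assms] .
  have SA: "?S ** ?A = - (?S ** ?M ** ?S)"
    by (simp only: heisenberg_matrix_def dynamic_matrix_def matrix_transpose_mul transpose_sigma_y
        MT matrix_minus_mult_right matrix_mul_assoc)
  have SA_transpose: "transpose (?S ** ?A) = - (?S ** ?M ** ?S)"
    by (simp only: SA transpose_minus matrix_transpose_mul transpose_sigma_y MT
        matrix_minus_mult_right matrix_minus_mult_left minus_minus matrix_mul_assoc)
  have "symp_form u (?A *v v) = vdot (transpose (?S ** ?A) *v u) v"
    by (simp only: symp_form_eq_vdot matrix_vector_mul_assoc vdot_matrix_vector_mult)
  also have "\<dots> = - vdot ((?S ** ?M ** ?S) *v u) v"
    by (simp only: SA_transpose matrix_minus_vector_mult vdot_minus_left)
  also have "vdot ((?S ** ?M ** ?S) *v u) v = vdot ((transpose ?S ** ?A) *v u) v"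
    by (simp only: heisenberg_matrix_def dynamic_matrix_def matrix_transpose_mul transpose_sigma_y
        MT matrix_minus_mult_right matrix_minus_mult_left matrix_mul_assoc minus_minus)
  also have "\<dots> = symp_form (?A *v u) v"
    by (simp only: symp_form_eq_vdot vdot_matrix_vector_mult matrix_vector_mul_assoc)
  finally show ?thesis .
qed

lemma herm_form_heisenberg_matrix:
  fixes \<mu> \<kappa> \<gamma> :: "real^('n::finite)^'n"
  assumes "transpose \<mu> = \<mu>" "transpose \<kappa> = \<kappa>"
  shows "herm_form u (heisenberg_matrix \<mu> \<kappa> \<gamma> *v v) = herm_form (heisenberg_matrix \<mu> \<kappa> \<gamma> *v u) v"
  unfolding herm_form_def symp_form_heisenberg_matrix[OF assms]
  by (simp only: heisenberg_matrix_vconj symp_form_minus_left minus_minus)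

definition diag_matrix :: "('m \<Rightarrow> 'a::zero) \<Rightarrow> 'a^'m^'m" where
  "diag_matrix f = (\<chi> a b. if a = b then f a else 0)"

lemma matrix_inv_mult:
  fixes X :: "'a::field^'n^'n"
  assumes "invertible X"
  shows "X ** matrix_inv X = mat 1" "matrix_inv X ** X = mat 1"
proof -
  have "\<exists>Y. X ** Y = mat 1 \<and> Y ** X = mat 1"
    using assms unfolding invertible_def by blast
  then have "X ** matrix_inv X = mat 1 \<and> matrix_inv X ** X = mat 1"
    unfolding matrix_inv_def by (rule someI_ex)
  then show "X ** matrix_inv X = mat 1" "matrix_inv X ** X = mat 1"
    by auto
qed

lemma matrix_inv_unique:
  fixes X :: "'a::field^'n^'n"
  assumes "X ** Y = mat 1" "Y ** X = mat 1"
  shows "matrix_inv X = Y"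
proof -
  have "invertible X"
    using assms unfolding invertible_def by blast
  have "matrix_inv X = matrix_inv X ** (X ** Y)"
    using assms by simp
  also have "\<dots> = Y"
    by (simp add: matrix_mul_assoc matrix_inv_mult[OF \<open>invertible X\<close>])
  finally show ?thesis .
qed

lemma transpose_right_inverse:
  fixes X :: "'a::field^'n^'n"
  shows "X ** Y = mat 1 \<Longrightarrow> transpose Y ** transpose X = mat 1"
  by (metis matrix_transpose_mul transpose_mat)

lemma column_matrix_mult: "column a (X ** Y) = X *v column a Y"
  by (simp add: column_def matrix_matrix_mult_def matrix_vector_mult_def vec_eq_iff)

lemma matrix_eq_columns: "(\<And>l. column l X = column l Y) \<Longrightarrow> X = Y"
  by (simp add: column_def vec_eq_iff)

lemma matrix_vector_mult_axis: "(P::complex^'n::finite^'m::finite) *v axis a 1 = column a P"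
  by (simp add: matrix_vector_mult_def column_def vec_eq_iff axis_def)

lemma column_mult_diag_matrix:
  fixes X :: "complex^'n::finite^'n"
  shows "column a (X ** diag_matrix f) = f a *s column a X"
proof -
  have "(\<Sum>k\<in>UNIV. X$i$k * diag_matrix f$k$a) = X$i$a * f a" for i
    by (rule trans[OF sum.remove[of UNIV a]]) (auto simp: diag_matrix_def)
  then show ?thesis
    by (simp add: column_def matrix_matrix_mult_def vec_eq_iff mult.commute)
qed

lemma diag_matrix_vector_mult:
  fixes u :: "complex^'n::finite"
  shows "(diag_matrix f *v u) $ a = f a * u $ a"
  unfolding matrix_vector_mult_def
  by (simp, rule trans[OF sum.remove[of UNIV a]]) (auto simp: diag_matrix_def)

lemma transpose_diag_matrix [simp]: "transpose (diag_matrix f) = diag_matrix f"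
  by (auto simp: transpose_def diag_matrix_def vec_eq_iff)

lemma physically_diagonalizable_similar_real_diag:
  fixes D P :: "complex^'m::finite^'m"
  assumes P: "invertible P" and diag: "matrix_inv P ** D ** P = diag_matrix (\<lambda>a. complex_of_real (lam a))"
  shows "physically_diagonalizable D"
proof -
  let ?L = "diag_matrix (\<lambda>a. complex_of_real (lam a))"
  have "diagonalizable_C D"
    unfolding diagonalizable_C_def using P diag by (auto simp: diag_matrix_def)
  moreover have "e \<in> \<real>" if v: "v \<noteq> 0" "D *v v = e *s v" for e v
  proof -
    define u where "u = matrix_inv P *v v"
    have "?L *v u = matrix_inv P *v (D *v ((P ** matrix_inv P) *v v))"
      by (simp only: u_def diag[symmetric] matrix_vector_mul_assoc matrix_mul_assoc)
    also have "\<dots> = e *s u"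
      by (simp add: matrix_inv_mult[OF P] v(2) vector_scalar_commute u_def)
    finally have Lu: "?L *v u = e *s u" .
    have "P *v u = v"
      by (simp add: u_def matrix_vector_mul_assoc matrix_inv_mult[OF P])
    then have "u \<noteq> 0"
      using v(1) by auto
    then obtain a where "u $ a \<noteq> 0"
      by (auto simp: vec_eq_iff)
    moreover have "complex_of_real (lam a) * u $ a = e * u $ a"
      using Lu by (simp add: vec_eq_iff diag_matrix_vector_mult)
    ultimately have "e = complex_of_real (lam a)"
      by simp
    then show ?thesis
      by simp
  qed
  ultimately show ?thesis
    unfolding physically_diagonalizable_def by blast
qed

lemma similar_diag_matrix_column:
  fixes D P :: "complex^'m::finite^'m"
  assumes "invertible P" "matrix_inv P ** D ** P = diag_matrix l"
  shows "D *v column a P = l a *s column a P"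
proof -
  have "D ** P = P ** diag_matrix l"
    by (simp flip: assms(2) add: matrix_mul_assoc matrix_inv_mult[OF assms(1)])
  then show ?thesis
    by (simp only: column_matrix_mult[symmetric] column_mult_diag_matrix)
qed

lemma similar_diag_matrix_transpose:
  fixes D P :: "complex^'m::finite^'m"
  assumes P: "invertible P" and diag: "matrix_inv P ** D ** P = diag_matrix l"
  defines "R \<equiv> transpose (matrix_inv P)"
  shows "invertible R" "matrix_inv R ** transpose D ** R = diag_matrix l"
proof -
  have "R ** transpose P = mat 1" "transpose P ** R = mat 1"
    unfolding R_def by (simp_all add: transpose_right_inverse matrix_inv_mult[OF P])
  then show "invertible R"
    by (auto simp: invertible_def)
  have inv: "matrix_inv R = transpose P"
    using \<open>R ** transpose P = mat 1\<close> \<open>transpose P ** R = mat 1\<close> by (rule matrix_inv_unique)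
  have "transpose (matrix_inv P ** D ** P) = transpose P ** transpose D ** R"
    by (simp add: R_def matrix_transpose_mul matrix_mul_assoc)
  then show "matrix_inv R ** transpose D ** R = diag_matrix l"
    by (simp add: inv diag)
qed

lemma physically_diagonalizable_transpose_eigenbasis:
  fixes D :: "complex^'m::finite^'m"
  assumes "physically_diagonalizable D"
  obtains R :: "complex^'m^'m" and lam :: "'m \<Rightarrow> real"
  where "invertible R" "\<And>a. transpose D *v column a R = complex_of_real (lam a) *s column a R"
proof -
  obtain P :: "complex^'m^'m" where P: "invertible P"
    and off: "\<And>i j. i \<noteq> j \<Longrightarrow> (matrix_inv P ** D ** P) $ i $ j = 0"
    using assms unfolding physically_diagonalizable_def diagonalizable_C_def by blast
  define l where "l a = (matrix_inv P ** D ** P) $ a $ a" for a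
  have diag: "matrix_inv P ** D ** P = diag_matrix l"
    using off by (auto simp: l_def diag_matrix_def vec_eq_iff)
  have "column a P \<noteq> 0" for a
  proof
    assume "column a P = 0"
    then have "matrix_inv P *v (P *v axis a 1) = 0"
      by (simp add: matrix_vector_mult_axis)
    then show False
      by (simp add: matrix_vector_mul_assoc matrix_inv_mult[OF P] axis_eq_0_iff)
  qed
  then have "l a \<in> \<real>" for a
    using assms similar_diag_matrix_column[OF P diag]
    unfolding physically_diagonalizable_def by blast
  then have "diag_matrix l = diag_matrix (\<lambda>a. complex_of_real (Re (l a)))"
    by (simp add: complex_is_Real_iff complex_eq_iff)
  then show ?thesis
    using similar_diag_matrix_transpose[OF P diag] similar_diag_matrix_column that by metis
qed

subsection \<open>Symplectic bases\<close>

definition symp_basis :: "('n::finite \<Rightarrow> complex^('n + 'n)) \<Rightarrow> bool" where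
  "symp_basis c \<longleftrightarrow>
     (\<forall>i j. symp_form (c i) (vconj (c j)) = (if i = j then 1 else 0)) \<and>
     (\<forall>i j. symp_form (c i) (c j) = 0)"

definition basis_vec :: "('n::finite \<Rightarrow> complex^('n + 'n)) \<Rightarrow> 'n + 'n \<Rightarrow> complex^('n + 'n)" where
  "basis_vec c l = (case l of Inl i \<Rightarrow> c i | Inr i \<Rightarrow> vconj (c i))"

definition basis_eigenvalue :: "('n \<Rightarrow> real) \<Rightarrow> 'n + 'n \<Rightarrow> complex" where
  "basis_eigenvalue \<omega> l = (case l of Inl i \<Rightarrow> complex_of_real (\<omega> i) | Inr i \<Rightarrow> complex_of_real (- \<omega> i))"

definition basis_matrix :: "('n::finite \<Rightarrow> complex^('n + 'n)) \<Rightarrow> complex^('n + 'n)^('n + 'n)" where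
  "basis_matrix c = (\<chi> k l. basis_vec c l $ k)"

text \<open>Its rows are the functionals \<open>\<omega>(-, c\<^sub>i\<^sup>*)\<close> and \<open>-\<omega>(-, c\<^sub>i)\<close>, dual to \<open>basis_vec c\<close>.\<close>

definition dual_basis_matrix :: "('n::finite \<Rightarrow> complex^('n + 'n)) \<Rightarrow> complex^('n + 'n)^('n + 'n)" where
  "dual_basis_matrix c = (\<chi> a k. case a of
      Inl i \<Rightarrow> (sigma_y *v vconj (c i))$k
    | Inr i \<Rightarrow> - (sigma_y *v c i)$k)"

lemma symp_basis_vconj:
  assumes "symp_basis c"
  shows "symp_form (vconj (c j)) (c i) = - (if i = j then 1 else 0)"
    and "symp_form (vconj (c j)) (vconj (c i)) = 0"
  using assms symp_form_antisym[of "vconj (c j)" "c i"] symp_form_vconj[of "c j" "c i"]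
  unfolding symp_basis_def by simp_all

lemma column_basis_matrix: "column l (basis_matrix c) = basis_vec c l"
  by (simp add: column_def basis_matrix_def vec_eq_iff)

lemma dual_basis_matrix_mult:
  assumes "symp_basis c"
  shows "dual_basis_matrix c ** basis_matrix c = mat 1"
proof -
  have "(dual_basis_matrix c ** basis_matrix c)$a$b =
      (case a of Inl i \<Rightarrow> symp_form (basis_vec c b) (vconj (c i))
               | Inr i \<Rightarrow> - symp_form (basis_vec c b) (c i))" for a b
    by (cases a) (auto simp: matrix_matrix_mult_def dual_basis_matrix_def basis_matrix_def
        symp_form_eq_vdot vdot_def mult.commute sum_negf)
  then show ?thesis
    using assms symp_basis_vconj[OF assms]
    by (auto simp: vec_eq_iff mat_def basis_vec_def symp_basis_def split: sum.splits)
qed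

lemma basis_matrix_mult_dual:
  "symp_basis c \<Longrightarrow> basis_matrix c ** dual_basis_matrix c = mat 1"
  using dual_basis_matrix_mult matrix_left_right_inverse by blast

lemma symp_basis_expansion:
  assumes "symp_basis c"
  shows "v = (\<Sum>l\<in>UNIV. (dual_basis_matrix c *v v)$l *s basis_vec c l)"
proof -
  have "v = basis_matrix c *v (dual_basis_matrix c *v v)"
    by (simp add: matrix_vector_mul_assoc basis_matrix_mult_dual[OF assms])
  then show ?thesis
    by (simp add: matrix_mult_sum column_basis_matrix)
qed

lemma symp_eigenbasis_imp_physically_diagonalizable:
  fixes \<mu> \<kappa> \<gamma> :: "real^('n::finite)^'n"
  assumes c: "symp_basis c"
    and eigen: "\<And>j. heisenberg_matrix \<mu> \<kappa> \<gamma> *v c j = complex_of_real (\<omega> j) *s c j"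
  shows "physically_diagonalizable (dynamic_matrix \<mu> \<kappa> \<gamma>)"
proof -
  let ?A = "heisenberg_matrix \<mu> \<kappa> \<gamma>" and ?W = "basis_matrix c" and ?K = "dual_basis_matrix c"
  have AW: "?A ** ?W = ?W ** diag_matrix (basis_eigenvalue \<omega>)"
  proof (rule matrix_eq_columns)
    fix l
    have "?A *v basis_vec c l = basis_eigenvalue \<omega> l *s basis_vec c l"
      by (cases l) (simp_all add: basis_vec_def basis_eigenvalue_def eigen
          heisenberg_matrix_vconj vconj_scale)
    then show "column l (?A ** ?W) = column l (?W ** diag_matrix (basis_eigenvalue \<omega>))"
      by (subst column_mult_diag_matrix) (simp add: column_matrix_mult column_basis_matrix)
  qed
  define P where "P = transpose ?K"
  have "transpose ?W ** P = mat 1" "P ** transpose ?W = mat 1"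
    unfolding P_def
    by (simp_all add: transpose_right_inverse dual_basis_matrix_mult[OF c] basis_matrix_mult_dual[OF c])
  then have "invertible P" and inv_P: "matrix_inv P = transpose ?W"
    by (auto simp: invertible_def intro: matrix_inv_unique)
  have "matrix_inv P ** dynamic_matrix \<mu> \<kappa> \<gamma> ** P = transpose (?K ** ?A ** ?W)"
    unfolding inv_P by (simp add: P_def heisenberg_matrix_def matrix_transpose_mul matrix_mul_assoc)
  also have "?K ** ?A ** ?W = diag_matrix (basis_eigenvalue \<omega>)"
    by (simp add: matrix_mul_assoc[symmetric] AW) (simp add: matrix_mul_assoc dual_basis_matrix_mult[OF c])
  also have "basis_eigenvalue \<omega> = (\<lambda>a. complex_of_real (case a of Inl i \<Rightarrow> \<omega> i | Inr i \<Rightarrow> - \<omega> i))"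
    by (auto simp: basis_eigenvalue_def split: sum.splits)
  finally show ?thesis
    using \<open>invertible P\<close> physically_diagonalizable_similar_real_diag by auto
qed

subsection \<open>Constructing a symplectic eigenbasis\<close>

definition isotropic_frame :: "nat \<Rightarrow> (nat \<Rightarrow> complex^('n::finite + 'n)) \<Rightarrow> bool" where
  "isotropic_frame k c \<longleftrightarrow>
     (\<forall>i<k. \<forall>j<k. herm_form (c i) (c j) = (if i = j then -1 else 0)) \<and>
     (\<forall>i<k. \<forall>j<k. symp_form (c i) (c j) = 0)"

lemma isotropic_frame_herm_form:
  assumes "isotropic_frame k c" "i < k" "j < k"
  shows "herm_form (c i) (c j) = (if i = j then -1 else 0)"
    and "herm_form (c j) (vconj (c i)) = 0"
    and "herm_form (vconj (c j)) (c i) = 0"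
    and "herm_form (vconj (c j)) (vconj (c i)) = (if i = j then 1 else 0)"
  using assms symp_form_vconj[of "c j" "c i"] herm_form_vconj[of "c j" "c i"]
  unfolding isotropic_frame_def herm_form_def by auto

text \<open>The \<open>herm_form\<close>-orthogonal projection onto the complement of the \<open>c\<^sub>i\<close> and \<open>c\<^sub>i\<^sup>*\<close>;
  the signs come from \<open>h(c\<^sub>i, c\<^sub>i) = -1\<close> and \<open>h(c\<^sub>i\<^sup>*, c\<^sub>i\<^sup>*) = 1\<close>.\<close>

definition frame_proj ::
  "nat \<Rightarrow> (nat \<Rightarrow> complex^('n::finite + 'n)) \<Rightarrow> complex^('n + 'n) \<Rightarrow> complex^('n + 'n)" where
  "frame_proj k c v = v + (\<Sum>i<k. herm_form (c i) v *s c i)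
                        - (\<Sum>i<k. herm_form (vconj (c i)) v *s vconj (c i))"

lemma herm_form_frame_proj:
  assumes frame: "isotropic_frame k c" and "j < k"
  shows "herm_form (c j) (frame_proj k c v) = 0"
    and "herm_form (vconj (c j)) (frame_proj k c v) = 0"
  using \<open>j < k\<close>
  by (simp_all add: frame_proj_def herm_form_add_right herm_form_diff_right herm_form_sum_right
      herm_form_scale_right isotropic_frame_herm_form[OF frame] if_distrib cong: if_cong)

lemma frame_proj_add: "frame_proj k c (u + v) = frame_proj k c u + frame_proj k c v"
  by (simp add: frame_proj_def herm_form_add_right vec_eq_iff sum_component sum.distrib algebra_simps)

lemma frame_proj_scale: "frame_proj k c (a *s v) = a *s frame_proj k c v"
  by (simp add: frame_proj_def herm_form_scale_right vec_eq_iff sum_component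
      sum_distrib_left algebra_simps)

lemma frame_proj_sum: "frame_proj k c (sum f S) = (\<Sum>x\<in>S. frame_proj k c (f x))"
proof (induction S rule: infinite_finite_induct)
  case (infinite S)
  then show ?case
    using frame_proj_scale[of k c 0 0] by simp
next
  case empty
  then show ?case
    using frame_proj_scale[of k c 0 0] by simp
qed (simp add: frame_proj_add)

lemma frame_proj_complement:
  "v - frame_proj k c v \<in> vec.span (c ` {..<k} \<union> (\<lambda>i. vconj (c i)) ` {..<k})"
proof -
  have "v - frame_proj k c v =
      (\<Sum>i<k. herm_form (vconj (c i)) v *s vconj (c i)) - (\<Sum>i<k. herm_form (c i) v *s c i)"
    by (simp add: frame_proj_def)
  also have "\<dots> \<in> vec.span (c ` {..<k} \<union> (\<lambda>i. vconj (c i)) ` {..<k})"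
    by (intro vec.span_diff vec.span_sum vec.span_scale vec.span_base) auto
  finally show ?thesis .
qed

lemma card_le_if_spanning:
  assumes "finite B" "\<And>y::complex^'m::finite. y \<in> vec.span B"
  shows "CARD('m) \<le> card B"
proof -
  have "vec.dim (UNIV :: (complex^'m) set) \<le> card B"
    using assms by (intro vec.dim_le_card) auto
  then show ?thesis
    by (simp add: vec.dim_UNIV card_cart_basis)
qed

locale krein_selfadjoint =
  fixes A :: "complex^('n::finite + 'n)^('n + 'n)" and R :: "complex^('n + 'n)^('n + 'n)"
    and lam :: "'n + 'n \<Rightarrow> real"
  assumes herm_form_selfadjoint: "\<And>u v. herm_form u (A *v v) = herm_form (A *v u) v"
    and vconj_anticommute: "\<And>v. A *v vconj v = - vconj (A *v v)"
    and invertible_R: "invertible R"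
    and eigen_R: "\<And>a. A *v column a R = complex_of_real (lam a) *s column a R"
begin

definition eigenframe :: "nat \<Rightarrow> (nat \<Rightarrow> complex^('n + 'n)) \<Rightarrow> (nat \<Rightarrow> real) \<Rightarrow> bool" where
  "eigenframe k c w \<longleftrightarrow> isotropic_frame k c \<and> (\<forall>i<k. A *v c i = complex_of_real (w i) *s c i)"

lemma eigen_vconj: "A *v z = complex_of_real \<mu> *s z \<Longrightarrow> A *v vconj z = complex_of_real (- \<mu>) *s vconj z"
  by (simp add: vconj_anticommute vconj_scale)

lemma eigen_combination:
  assumes "A *v u = complex_of_real \<mu> *s u" "A *v v = complex_of_real \<mu> *s v"
  shows "A *v (u + a *s v) = complex_of_real \<mu> *s (u + a *s v)"
  using assms by (simp add: matrix_vector_right_distrib vector_scalar_commute vector_add_ldistrib)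

lemma eigenvector_normalize:
  assumes eigen: "A *v z = complex_of_real \<mu> *s z" and nonnull: "herm_form z z \<noteq> 0"
    and orth: "\<forall>i<k. herm_form (c i) z = 0 \<and> herm_form (vconj (c i)) z = 0"
  obtains z' \<mu>' where "A *v z' = complex_of_real \<mu>' *s z'" "herm_form z' z' = -1"
    "\<forall>i<k. herm_form (c i) z' = 0 \<and> herm_form (vconj (c i)) z' = 0"
proof -
  have scale: "A *v (complex_of_real s *s x) = complex_of_real \<nu> *s (complex_of_real s *s x)"
    "\<forall>i<k. herm_form (c i) (complex_of_real s *s x) = 0 \<and> herm_form (vconj (c i)) (complex_of_real s *s x) = 0"
    if "A *v x = complex_of_real \<nu> *s x" "\<forall>i<k. herm_form (c i) x = 0 \<and> herm_form (vconj (c i)) x = 0"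
    for s \<nu> x
    using that by (simp_all add: vector_scalar_commute herm_form_scale_right mult.commute)
  define t where "t = Re (herm_form z z)"
  have t: "herm_form z z = complex_of_real t"
    unfolding t_def by (rule herm_form_self_real)
  consider "t < 0" | "t > 0"
    using nonnull t by force
  then show ?thesis
  proof cases
    case 1
    then show ?thesis
      using that herm_form_normalize[OF t 1] scale[OF eigen orth] by blast
  next
    case 2
    have "herm_form (vconj z) (vconj z) = complex_of_real (- t)" "- t < 0"
      using herm_form_vconj[of z z] t 2 by simp_all
    moreover have "\<forall>i<k. herm_form (c i) (vconj z) = 0 \<and> herm_form (vconj (c i)) (vconj z) = 0"
      using orth herm_form_vconj[of "vconj (c _)" z] herm_form_vconj[of "c _" z] by simp
    ultimately show ?thesis
      using that herm_form_normalize scale[OF eigen_vconj[OF eigen]] by blast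
  qed
qed

lemma frame_proj_commute:
  assumes "eigenframe k c w"
  shows "A *v frame_proj k c v = frame_proj k c (A *v v)"
proof -
  have eigen: "A *v c i = complex_of_real (w i) *s c i" if "i < k" for i
    using assms that unfolding eigenframe_def by blast
  have "herm_form (c i) (A *v v) *s c i = herm_form (c i) v *s (A *v c i)"
    and "herm_form (vconj (c i)) (A *v v) *s vconj (c i) = herm_form (vconj (c i)) v *s (A *v vconj (c i))"
    if "i < k" for i
    using herm_form_selfadjoint[of "c i" v] herm_form_selfadjoint[of "vconj (c i)" v]
      eigen[OF that] eigen_vconj[OF eigen[OF that]]
    by (simp_all add: herm_form_scale_left herm_form_minus_left mult.commute)
  then show ?thesis
    by (simp add: frame_proj_def matrix_vector_right_distrib matrix_vector_mult_diff_distrib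
        matrix_vector_mult_sum vector_scalar_commute)
qed

lemma herm_form_frame_proj_null:
  assumes frame: "eigenframe k c w"
    and null: "\<And>z \<mu>. A *v z = complex_of_real \<mu> *s z \<Longrightarrow>
        (\<forall>i<k. herm_form (c i) z = 0 \<and> herm_form (vconj (c i)) z = 0) \<Longrightarrow> herm_form z z = 0"
  shows "herm_form (frame_proj k c x) (frame_proj k c y) = 0"
proof -
  define r where "r a = frame_proj k c (column a R)" for a
  have eigen_r: "A *v r a = complex_of_real (lam a) *s r a" for a
    by (simp add: r_def frame_proj_commute[OF frame] eigen_R frame_proj_scale)
  have orth_r: "\<forall>i<k. herm_form (c i) (r a) = 0 \<and> herm_form (vconj (c i)) (r a) = 0" for a
    using frame herm_form_frame_proj unfolding r_def eigenframe_def by blast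
  have "herm_form (r a) (r b) = 0" for a b
  proof (cases "lam a = lam b")
    case True
    have "herm_form (r a + x *s r b) (r a + x *s r b) = 0" for x
      using eigen_combination[of "r a" "lam a" "r b" x] eigen_r[of a] eigen_r[of b] True orth_r
      by (intro null) (auto simp: herm_form_add_right herm_form_scale_right)
    from this[of 1] this[of \<i>] show ?thesis
      by (intro herm_form_polarization_zero[OF null[OF eigen_r orth_r] null[OF eigen_r orth_r]]) simp_all
  next
    case False
    have "complex_of_real (lam b) * herm_form (r a) (r b) = complex_of_real (lam a) * herm_form (r a) (r b)"
      using herm_form_selfadjoint[of "r a" "r b"]
      by (simp add: eigen_r herm_form_scale_left herm_form_scale_right)
    with False show ?thesis
      by simp
  qed
  moreover have "frame_proj k c v = (\<Sum>a\<in>UNIV. (matrix_inv R *v v) $ a *s r a)" for v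
  proof -
    have "v = R *v (matrix_inv R *v v)"
      by (simp add: matrix_vector_mul_assoc matrix_inv_mult[OF invertible_R])
    then have v: "v = (\<Sum>a\<in>UNIV. (matrix_inv R *v v) $ a *s column a R)"
      by (simp add: matrix_mult_sum)
    show ?thesis
      by (subst (1) v) (simp add: frame_proj_sum frame_proj_scale r_def)
  qed
  ultimately show ?thesis
    by (simp add: herm_form_sum_left herm_form_sum_right herm_form_scale_left herm_form_scale_right)
qed

lemma exists_nonnull_eigenvector:
  assumes frame: "eigenframe k c w" and "k < CARD('n)"
  shows "\<exists>z \<mu>. A *v z = complex_of_real \<mu> *s z \<and> herm_form z z \<noteq> 0 \<and>
           (\<forall>i<k. herm_form (c i) z = 0 \<and> herm_form (vconj (c i)) z = 0)"
proof (rule ccontr)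
  assume "\<not> ?thesis"
  then have "\<And>z \<mu>. A *v z = complex_of_real \<mu> *s z \<Longrightarrow>
      (\<forall>i<k. herm_form (c i) z = 0 \<and> herm_form (vconj (c i)) z = 0) \<Longrightarrow> herm_form z z = 0"
    by blast
  then have null: "herm_form (frame_proj k c x) (frame_proj k c y) = 0" for x y
    by (rule herm_form_frame_proj_null[OF frame])
  have iso: "isotropic_frame k c"
    using frame by (simp add: eigenframe_def)
  have "herm_form (x - frame_proj k c x) (frame_proj k c y) = 0" for x y
  proof -
    have "(\<Sum>i<k. cnj (herm_form (c i) x) * herm_form (c i) (frame_proj k c y)) = 0"
      "(\<Sum>i<k. cnj (herm_form (vconj (c i)) x) * herm_form (vconj (c i)) (frame_proj k c y)) = 0"
      by (simp_all add: herm_form_frame_proj[OF iso])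
    then show ?thesis
      by (simp add: frame_proj_def[of k c x] herm_form_diff_left herm_form_sum_left
          herm_form_scale_left)
  qed
  then have "herm_form x (frame_proj k c y) = 0" for x y
    using null[of x y] by (simp add: herm_form_diff_left)
  then have "frame_proj k c y = 0" for y
    by (rule herm_form_nondegenerate)
  then have "y \<in> vec.span (c ` {..<k} \<union> (\<lambda>i. vconj (c i)) ` {..<k})" for y
    using frame_proj_complement[of y k c] by simp
  then have "CARD('n + 'n) \<le> card (c ` {..<k} \<union> (\<lambda>i. vconj (c i)) ` {..<k})"
    by (intro card_le_if_spanning) auto
  also have "\<dots> \<le> card (c ` {..<k}) + card ((\<lambda>i. vconj (c i)) ` {..<k})"
    by (rule card_Un_le)
  also have "\<dots> \<le> k + k"
    using card_image_le[of "{..<k}" c] card_image_le[of "{..<k}" "\<lambda>i. vconj (c i)"] by simp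
  finally show False
    using \<open>k < CARD('n)\<close> by simp
qed

lemma eigenframe_extend:
  assumes frame: "eigenframe k c w" and "k < CARD('n)"
  shows "\<exists>c' w'. eigenframe (Suc k) c' w'"
proof -
  obtain z0 \<mu>0 where "A *v z0 = complex_of_real \<mu>0 *s z0" "herm_form z0 z0 \<noteq> 0"
    "\<forall>i<k. herm_form (c i) z0 = 0 \<and> herm_form (vconj (c i)) z0 = 0"
    using exists_nonnull_eigenvector[OF assms] by blast
  then obtain z \<mu> where z: "A *v z = complex_of_real \<mu> *s z" "herm_form z z = -1"
    and orth: "\<forall>i<k. herm_form (c i) z = 0 \<and> herm_form (vconj (c i)) z = 0"
    using eigenvector_normalize by blast
  have "herm_form z (c i) = 0" "symp_form (c i) z = 0" "symp_form z (c i) = 0" if "i < k" for i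
    using orth that herm_form_conj_sym[of z "c i"] symp_form_antisym[of z "c i"]
    by (simp_all add: herm_form_def)
  moreover have "symp_form z z = 0"
    using symp_form_antisym[of z z] by simp
  ultimately have "eigenframe (Suc k) (c(k := z)) (w(k := \<mu>))"
    using frame z orth by (auto simp: eigenframe_def isotropic_frame_def less_Suc_eq)
  then show ?thesis
    by blast
qed

lemma eigenframe_exists: "k \<le> CARD('n) \<Longrightarrow> \<exists>c w. eigenframe k c w"
proof (induction k)
  case 0
  then show ?case
    by (simp add: eigenframe_def isotropic_frame_def)
next
  case (Suc k)
  then show ?case
    using eigenframe_extend by (metis Suc_le_lessD less_imp_le_nat)
qed

lemma exists_symp_eigenbasis:
  "\<exists>c \<omega>. symp_basis c \<and> (\<forall>j. A *v c j = complex_of_real (\<omega> j) *s c j)"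
proof -
  obtain c w where frame: "eigenframe CARD('n) c w"
    using eigenframe_exists by blast
  obtain g :: "'n \<Rightarrow> nat" where g: "bij_betw g UNIV {..<CARD('n)}"
    using ex_bij_betw_finite_nat[of "UNIV :: 'n set"] atLeast0LessThan by auto
  have g_less: "g i < CARD('n)" for i
    using g by (auto simp: bij_betw_def)
  have g_eq: "g i = g j \<longleftrightarrow> i = j" for i j
    using g by (auto simp: bij_betw_def inj_on_def)
  have herm: "herm_form (c (g i)) (c (g j)) = (if i = j then -1 else 0)"
    and symp: "symp_form (c (g i)) (c (g j)) = 0"
    and eigen: "A *v c (g j) = complex_of_real (w (g j)) *s c (g j)" for i j
    using frame g_less[of i] g_less[of j] unfolding eigenframe_def isotropic_frame_def
    by (simp_all add: g_eq)
  have "symp_form (c (g i)) (vconj (c (g j))) = (if i = j then 1 else 0)" for i j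
    using symp_form_vconj[of "vconj (c (g i))" "c (g j)"] herm[of i j]
    by (simp add: herm_form_def)
  then have "symp_basis (c \<circ> g)"
    using symp by (simp add: symp_basis_def)
  then show ?thesis
    using eigen by (intro exI[of _ "c \<circ> g"] exI[of _ "w \<circ> g"]) simp
qed

end

lemma physically_diagonalizable_imp_symp_eigenbasis:
  fixes \<mu> \<kappa> \<gamma> :: "real^('n::finite)^'n"
  assumes "transpose \<mu> = \<mu>" "transpose \<kappa> = \<kappa>"
    and "physically_diagonalizable (dynamic_matrix \<mu> \<kappa> \<gamma>)"
  shows "\<exists>c \<omega>. symp_basis c \<and> (\<forall>j. heisenberg_matrix \<mu> \<kappa> \<gamma> *v c j = complex_of_real (\<omega> j) *s c j)"
proof -
  obtain R :: "complex^('n + 'n)^('n + 'n)" and lam where R: "invertible R"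
    "\<And>a. transpose (dynamic_matrix \<mu> \<kappa> \<gamma>) *v column a R = complex_of_real (lam a) *s column a R"
    using physically_diagonalizable_transpose_eigenbasis[OF assms(3)] by blast
  interpret krein_selfadjoint "heisenberg_matrix \<mu> \<kappa> \<gamma>" R lam
  proof
    show "herm_form u (heisenberg_matrix \<mu> \<kappa> \<gamma> *v v) = herm_form (heisenberg_matrix \<mu> \<kappa> \<gamma> *v u) v"
      for u v
      by (rule herm_form_heisenberg_matrix[OF assms(1,2)])
    show "heisenberg_matrix \<mu> \<kappa> \<gamma> *v vconj v = - vconj (heisenberg_matrix \<mu> \<kappa> \<gamma> *v v)" for v
      by (rule heisenberg_matrix_vconj)
    show "heisenberg_matrix \<mu> \<kappa> \<gamma> *v column a R = complex_of_real (lam a) *s column a R" for a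
      unfolding heisenberg_matrix_def by (rule R(2))
  qed (rule R(1))
  show ?thesis
    by (rule exists_symp_eigenbasis)
qed

subsection \<open>Operators in the canonical variables\<close>

definition symp_trace :: "complex^('n::finite + 'n)^('n + 'n) \<Rightarrow> complex" where
  "symp_trace N = (\<Sum>k\<in>UNIV. \<Sum>l\<in>UNIV. N$k$l * sigma_y$k$l)"

definition hamiltonian_coeffs ::
  "real^('n::finite)^'n \<Rightarrow> real^'n^'n \<Rightarrow> real^'n^'n \<Rightarrow> complex^('n + 'n)^('n + 'n)" where
  "hamiltonian_coeffs \<mu> \<kappa> \<gamma> = (\<chi> k l. block_M \<mu> \<kappa> \<gamma> $ k $ l / 2)"

definition mode_coeffs ::
  "('n::finite \<Rightarrow> complex^('n + 'n)) \<Rightarrow> ('n \<Rightarrow> real) \<Rightarrow> complex^('n + 'n)^('n + 'n)" where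
  "mode_coeffs c \<omega> = (\<Sum>i\<in>UNIV. \<chi> k l. complex_of_real (\<omega> i) * (cnj (c i $ k) * c i $ l))"

lemma symp_trace_diff: "symp_trace (N1 - N2) = symp_trace N1 - symp_trace N2"
  by (simp add: symp_trace_def left_diff_distrib sum_subtractf)

lemma symp_trace_symmetric:
  assumes "\<And>k l. N$l$k = N$k$l"
  shows "symp_trace N = 0"
proof -
  have "symp_trace N = (\<Sum>k\<in>UNIV. \<Sum>l\<in>UNIV. N$l$k * sigma_y$l$k)"
    unfolding symp_trace_def by (rule sum.swap)
  also have "\<dots> = (\<Sum>k\<in>UNIV. \<Sum>l\<in>UNIV. - (N$k$l * sigma_y$k$l))"
    by (intro sum.cong refl) (subst sigma_y_antisym, simp add: assms)
  also have "\<dots> = - symp_trace N"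
    by (simp add: symp_trace_def sum_negf)
  finally show ?thesis
    by simp
qed

lemma symp_trace_hamiltonian_coeffs:
  assumes "transpose \<mu> = \<mu>" "transpose \<kappa> = \<kappa>"
  shows "symp_trace (hamiltonian_coeffs \<mu> \<kappa> \<gamma>) = 0"
proof (rule symp_trace_symmetric)
  fix k l
  have "transpose (block_M \<mu> \<kappa> \<gamma>) $ k $ l = block_M \<mu> \<kappa> \<gamma> $ k $ l"
    using transpose_block_M[OF assms] by simp
  then show "hamiltonian_coeffs \<mu> \<kappa> \<gamma> $ l $ k = hamiltonian_coeffs \<mu> \<kappa> \<gamma> $ k $ l"
    by (simp add: transpose_def hamiltonian_coeffs_def)
qed

lemma symp_trace_mode_coeffs:
  "symp_trace (mode_coeffs c \<omega>) = (\<Sum>i\<in>UNIV. complex_of_real (\<omega> i) * herm_form (c i) (c i))"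
proof -
  have "symp_trace (mode_coeffs c \<omega>) =
      (\<Sum>k\<in>UNIV. \<Sum>l\<in>UNIV. \<Sum>i\<in>UNIV. complex_of_real (\<omega> i) * (cnj (c i $ k) * c i $ l * sigma_y$k$l))"
    by (simp add: symp_trace_def mode_coeffs_def sum_component sum_distrib_right mult.assoc)
  also have "\<dots> = (\<Sum>i\<in>UNIV. \<Sum>k\<in>UNIV. \<Sum>l\<in>UNIV. complex_of_real (\<omega> i) * (cnj (c i $ k) * c i $ l * sigma_y$k$l))"
    by (subst sum.swap) (intro sum.cong refl, rule sum.swap)
  also have "\<dots> = (\<Sum>i\<in>UNIV. complex_of_real (\<omega> i) * herm_form (c i) (c i))"
    by (simp add: herm_form_def symp_form_def sum_distrib_left mult_ac)
  finally show ?thesis .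
qed

locale ccr_algebra =
  fixes emb :: "complex \<Rightarrow> 'a::ring_1" and adj :: "'a \<Rightarrow> 'a" and p q :: "'n::finite \<Rightarrow> 'a"
  assumes star_algebra: "star_algebra emb adj" and canonical: "canonical_pq emb adj p q"
begin

lemma emb_1: "emb 1 = 1"
  and emb_add: "emb (a + b) = emb a + emb b"
  and emb_mult: "emb (a * b) = emb a * emb b"
  and emb_commute: "emb a * x = x * emb a"
  and adj_add: "adj (x + y) = adj x + adj y"
  and adj_mult: "adj (x * y) = adj y * adj x"
  and adj_emb: "adj (emb a) = emb (cnj a)"
  using star_algebra unfolding star_algebra_def by blast+

lemma emb_0: "emb 0 = 0"
  using emb_add[of 0 0] by simp

lemma emb_minus: "emb (- a) = - emb a"
  using emb_add[of a "- a"] emb_0 by (metis add.commute add_eq_0_iff2)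

lemma emb_diff: "emb (a - b) = emb a - emb b"
  using emb_add[of a "- b"] emb_minus by simp

lemma emb_sum: "emb (sum f A) = (\<Sum>x\<in>A. emb (f x))"
  by (induction A rule: infinite_finite_induct) (auto simp: emb_0 emb_add)

lemma emb_eq_iff: "emb a = emb b \<longleftrightarrow> a = b"
proof
  assume "emb a = emb b"
  show "a = b"
  proof (rule ccontr)
    assume "a \<noteq> b"
    then have "emb ((a - b) * inverse (a - b)) = 1"
      by (simp add: emb_1)
    moreover have "emb (a - b) = 0"
      using \<open>emb a = emb b\<close> by (simp add: emb_diff)
    ultimately show False
      by (simp add: emb_mult)
  qed
qed simp

lemma emb_delta: "emb (if i = j then 1 else 0) = (if i = j then 1 else 0)"
  by (simp add: emb_1 emb_0)

lemma adj_sum: "adj (sum f A) = (\<Sum>x\<in>A. adj (f x))"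
proof -
  have "adj 0 = 0"
    using adj_add[of 0 0] by simp
  then show ?thesis
    by (induction A rule: infinite_finite_induct) (auto simp: adj_add)
qed

lemma adj_emb_mult: "adj (emb a * x) = emb (cnj a) * adj x"
  unfolding adj_mult adj_emb by (rule emb_commute[symmetric])

lemma commutator_emb_mult_left: "commutator (emb a * x) y = emb a * commutator x y"
  and commutator_emb_mult_right: "commutator y (emb a * x) = emb a * commutator y x"
proof -
  have "y * (emb a * x) = emb a * (y * x)"
    by (metis emb_commute mult.assoc)
  then show "commutator (emb a * x) y = emb a * commutator x y"
    and "commutator y (emb a * x) = emb a * commutator y x"
    by (simp_all add: commutator_def right_diff_distrib mult.assoc)
qed

lemma commutator_emb: "commutator y (emb a) = 0"
  unfolding commutator_def by (metis emb_commute diff_self)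

lemma adj_phi: "adj (phi p q k) = phi p q k"
  using canonical unfolding canonical_pq_def phi_def by (cases k) auto

lemma commutator_phi: "commutator (phi p q k) (phi p q l) = emb (sigma_y$k$l)"
proof (cases k; cases l)
  fix i j
  assume "k = Inr i" "l = Inl j"
  then have "commutator (phi p q k) (phi p q l) = - commutator (p j) (q i)"
    using commutator_antisym unfolding phi_def by simp
  then show ?thesis
    using canonical \<open>k = Inr i\<close> \<open>l = Inl j\<close>
    unfolding canonical_pq_def by (auto simp: emb_minus emb_0)
qed (use canonical in \<open>auto simp: canonical_pq_def phi_def emb_0\<close>)

definition lin_op :: "complex^('n + 'n) \<Rightarrow> 'a" where
  "lin_op v = (\<Sum>k\<in>UNIV. emb (v$k) * phi p q k)"

definition quad_op :: "complex^('n + 'n)^('n + 'n) \<Rightarrow> 'a" where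
  "quad_op N = (\<Sum>k\<in>UNIV. \<Sum>l\<in>UNIV. emb (N$k$l) * phi p q k * phi p q l)"

definition mode_sum :: "('n \<Rightarrow> complex^('n + 'n)) \<Rightarrow> ('n \<Rightarrow> real) \<Rightarrow> 'a" where
  "mode_sum c \<omega> = (\<Sum>i\<in>UNIV. emb (complex_of_real (\<omega> i)) * adj (lin_op (c i)) * lin_op (c i))"

lemma lin_comb_eq_lin_op: "lin_comb emb p q c = lin_op (vec_lambda c)"
  by (simp add: lin_comb_def lin_op_def)

lemma commutator_lin_op: "commutator (lin_op a) (lin_op b) = emb (symp_form a b)"
proof -
  have "commutator (lin_op a) (lin_op b) =
      (\<Sum>k\<in>UNIV. \<Sum>l\<in>UNIV. emb (a$k * sigma_y$k$l * b$l))"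
    unfolding lin_op_def commutator_sum_left commutator_sum_right commutator_emb_mult_left
      commutator_emb_mult_right commutator_phi
    by (simp add: emb_mult[symmetric] sum_distrib_left mult_ac) (rule sum.swap)
  then show ?thesis
    by (simp add: symp_form_def emb_sum)
qed

lemma lin_op_add: "lin_op (a + b) = lin_op a + lin_op b"
  and lin_op_scale: "lin_op (c *s a) = emb c * lin_op a"
  and lin_op_diff: "lin_op (a - b) = lin_op a - lin_op b"
  by (simp_all add: lin_op_def emb_add emb_mult emb_diff distrib_right left_diff_distrib
      sum.distrib sum_distrib_left sum_subtractf mult.assoc)

lemma lin_op_sum: "lin_op (sum f A) = (\<Sum>x\<in>A. lin_op (f x))"
proof -
  have "lin_op 0 = 0"
    by (simp add: lin_op_def emb_0)
  then show ?thesis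
    by (induction A rule: infinite_finite_induct) (auto simp: lin_op_add)
qed

lemma adj_lin_op: "adj (lin_op a) = lin_op (vconj a)"
  by (simp add: lin_op_def adj_sum adj_emb_mult adj_phi)

lemma lin_op_eq_0_iff: "lin_op a = 0 \<longleftrightarrow> a = 0"
proof
  assume "lin_op a = 0"
  then have "emb (symp_form x a) = emb 0" for x
    using commutator_lin_op[of x a] by (simp add: commutator_def emb_0)
  then have "symp_form (- x) a = 0" for x
    by (simp add: emb_eq_iff symp_form_minus_left)
  then show "a = 0"
    by (metis symp_form_nondegenerate minus_minus)
qed (simp add: lin_op_def emb_0)

lemma lin_op_axis: "lin_op (axis m 1) = phi p q m"
proof -
  have "lin_op (axis m 1) = (\<Sum>k\<in>UNIV. if k = m then phi p q k else 0)"
    unfolding lin_op_def by (intro sum.cong refl) (simp add: axis_def emb_1 emb_0)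
  then show ?thesis
    by simp
qed

lemma commutator_phi_quad_op:
  "commutator (phi p q m) (quad_op N) = lin_op (\<chi> l. \<Sum>k\<in>UNIV. (N$k$l + N$l$k) * sigma_y$m$k)"
proof -
  have summand: "commutator (phi p q m) (emb n * phi p q k * phi p q l) =
      emb (n * sigma_y$m$k) * phi p q l + emb (n * sigma_y$m$l) * phi p q k" for n k l
  proof -
    have "commutator (phi p q m) (emb n * phi p q k * phi p q l) =
        commutator (phi p q m) (emb n * phi p q k) * phi p q l
        + emb n * phi p q k * commutator (phi p q m) (phi p q l)"
      by (rule commutator_mult_right)
    also have "\<dots> = emb n * emb (sigma_y$m$k) * phi p q l + emb n * (phi p q k * emb (sigma_y$m$l))"
      by (simp add: commutator_emb_mult_right commutator_phi mult.assoc)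
    also have "phi p q k * emb (sigma_y$m$l) = emb (sigma_y$m$l) * phi p q k"
      by (rule emb_commute[symmetric])
    finally show ?thesis
      by (simp add: emb_mult mult.assoc)
  qed
  have "commutator (phi p q m) (quad_op N) =
      (\<Sum>l\<in>UNIV. \<Sum>k\<in>UNIV. emb (N$k$l * sigma_y$m$k) * phi p q l)
      + (\<Sum>l\<in>UNIV. \<Sum>k\<in>UNIV. emb (N$l$k * sigma_y$m$k) * phi p q l)"
    unfolding quad_op_def commutator_sum_right summand
    by (simp add: sum.distrib) (rule sum.swap)
  also have "\<dots> = lin_op (\<chi> l. \<Sum>k\<in>UNIV. (N$k$l + N$l$k) * sigma_y$m$k)"
    by (simp add: lin_op_def emb_sum sum_distrib_right sum.distrib[symmetric] distrib_right emb_add)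
  finally show ?thesis .
qed

lemma quad_op_diff: "quad_op (N1 - N2) = quad_op N1 - quad_op N2"
  by (simp add: quad_op_def emb_diff left_diff_distrib sum_subtractf)

lemma quad_op_sum: "quad_op (sum f A) = (\<Sum>x\<in>A. quad_op (f x))"
  by (induction A rule: infinite_finite_induct) (auto simp: quad_op_def emb_0 emb_add distrib_right sum.distrib)

lemma adj_lin_op_mult_lin_op: "adj (lin_op a) * lin_op b = quad_op (\<chi> k l. cnj (a$k) * b$l)"
proof -
  have "emb x * phi p q k * (emb y * phi p q l) = emb (x * y) * phi p q k * phi p q l" for x y k l
    by (simp add: emb_mult mult.assoc) (metis emb_commute mult.assoc)
  then show ?thesis
    unfolding adj_lin_op unfolding lin_op_def quad_op_def sum_distrib_right
    by (simp add: sum_distrib_left)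
qed

lemma mode_sum_eq_quad_op: "mode_sum c \<omega> = quad_op (mode_coeffs c \<omega>)"
  unfolding mode_sum_def mode_coeffs_def quad_op_sum
  by (intro sum.cong refl)
    (simp add: mult.assoc adj_lin_op_mult_lin_op quad_op_def emb_mult sum_distrib_left)

lemma quad_op_central_antisym:
  assumes "\<And>m. commutator (phi p q m) (quad_op N) = 0"
  shows "N$l$k = - N$k$l"
proof -
  have zero: "(\<Sum>k\<in>UNIV. (N$k$l + N$l$k) * sigma_y$m$k) = 0" for m l
    using assms[of m] unfolding commutator_phi_quad_op lin_op_eq_0_iff by (simp add: vec_eq_iff)
  have "N$Inr i$l + N$l$Inr i = 0" "N$Inl i$l + N$l$Inl i = 0" for i l
    using zero[of l "Inl i"] zero[of l "Inr i"]
    by (simp_all add: sum_UNIV_Plus if_distrib cong: if_cong)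
  then show ?thesis
    by (cases k) (simp_all add: add_eq_0_iff add.commute)
qed

text \<open>Antisymmetry turns \<open>2 quad_op N\<close> into \<open>\<Sum>\<^sub>k\<^sub>l N\<^sub>k\<^sub>l [\<phi>\<^sub>k, \<phi>\<^sub>l]\<close>.\<close>

lemma quad_op_antisym:
  assumes antisym: "\<And>k l. N$l$k = - N$k$l"
  shows "quad_op N = emb (symp_trace N / 2)"
proof -
  have "quad_op N = (\<Sum>k\<in>UNIV. \<Sum>l\<in>UNIV. emb (N$l$k) * phi p q l * phi p q k)"
    unfolding quad_op_def by (rule sum.swap)
  also have "\<dots> = - (\<Sum>k\<in>UNIV. \<Sum>l\<in>UNIV. emb (N$k$l) * phi p q l * phi p q k)"
    unfolding sum_negf[symmetric] by (intro sum.cong refl) (subst antisym, simp add: emb_minus)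
  finally have "quad_op N + quad_op N =
      (\<Sum>k\<in>UNIV. \<Sum>l\<in>UNIV. emb (N$k$l) * commutator (phi p q k) (phi p q l))"
    by (simp add: quad_op_def commutator_def right_diff_distrib mult.assoc sum_subtractf)
  also have "\<dots> = emb (symp_trace N)"
    by (simp add: commutator_phi symp_trace_def emb_sum emb_mult)
  finally have "emb 2 * quad_op N = emb (symp_trace N)"
    using emb_add[of 1 1] by (simp add: emb_1 mult_2)
  then have "emb (1/2) * (emb 2 * quad_op N) = emb (symp_trace N / 2)"
    by (simp add: emb_mult[symmetric])
  then show ?thesis
    by (simp add: mult.assoc[symmetric] emb_mult[symmetric] emb_1)
qed

lemma hamiltonian_eq_quad_op: "hamiltonian emb p q \<mu> \<kappa> \<gamma> = quad_op (hamiltonian_coeffs \<mu> \<kappa> \<gamma>)"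
  unfolding hamiltonian_def quad_op_def hamiltonian_coeffs_def sum_UNIV_Plus
  by (simp add: block_M_def phi_def sum.distrib add_ac)

lemma commutator_lin_op_hamiltonian:
  fixes \<mu> \<kappa> \<gamma> :: "real^'n^'n"
  assumes "transpose \<mu> = \<mu>" "transpose \<kappa> = \<kappa>"
  shows "commutator (lin_op c) (hamiltonian emb p q \<mu> \<kappa> \<gamma>) = lin_op (heisenberg_matrix \<mu> \<kappa> \<gamma> *v c)"
proof -
  let ?M = "block_M \<mu> \<kappa> \<gamma>" and ?H = "hamiltonian_coeffs \<mu> \<kappa> \<gamma>"
  define w where "w m = (\<chi> l. \<Sum>k\<in>UNIV. (?H$k$l + ?H$l$k) * sigma_y$m$k)" for m
  have "transpose ?M $ k $ l = ?M $ k $ l" for k l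
    using transpose_block_M[OF assms] by simp
  then have H: "?H$k$l + ?H$l$k = ?M$k$l" for k l
    by (simp add: transpose_def hamiltonian_coeffs_def)
  have "commutator (lin_op c) (hamiltonian emb p q \<mu> \<kappa> \<gamma>) = (\<Sum>m\<in>UNIV. emb (c$m) * lin_op (w m))"
    unfolding hamiltonian_eq_quad_op lin_op_def[of c] commutator_sum_left commutator_emb_mult_left
      commutator_phi_quad_op w_def ..
  also have "\<dots> = lin_op (\<Sum>m\<in>UNIV. c$m *s w m)"
    by (simp add: lin_op_sum lin_op_scale)
  also have "(\<Sum>m\<in>UNIV. c$m *s w m) = heisenberg_matrix \<mu> \<kappa> \<gamma> *v c"
  proof -
    have "(heisenberg_matrix \<mu> \<kappa> \<gamma> *v c)$l = (\<Sum>m\<in>UNIV. (\<Sum>k\<in>UNIV. sigma_y$m$k * ?M$k$l) * c$m)" for l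
      by (simp add: heisenberg_matrix_def dynamic_matrix_def transpose_def matrix_matrix_mult_def
          matrix_vector_mult_def)
    moreover have "(\<Sum>m\<in>UNIV. c$m *s w m)$l = (\<Sum>m\<in>UNIV. c$m * (\<Sum>k\<in>UNIV. ?M$k$l * sigma_y$m$k))" for l
      by (simp add: w_def sum_component H)
    ultimately show ?thesis
      by (simp add: vec_eq_iff sum_distrib_left sum_distrib_right mult_ac)
  qed
  finally show ?thesis .
qed

lemma lin_op_inject: "lin_op a = lin_op b \<longleftrightarrow> a = b"
  using lin_op_eq_0_iff[of "a - b"] by (simp only: lin_op_diff right_minus_eq)

lemma symp_basis_iff_commutators:
  "symp_basis c \<longleftrightarrow>
     (\<forall>i j. commutator (lin_op (c i)) (adj (lin_op (c j))) = (if i = j then 1 else 0)) \<and>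
     (\<forall>i j. commutator (lin_op (c i)) (lin_op (c j)) = 0)"
proof -
  have delta: "emb x = (if i = j then 1 else 0) \<longleftrightarrow> x = (if i = j then 1 else 0)" for x and i j :: 'n
    using emb_eq_iff[of x "if i = j then 1 else 0"] by (simp only: emb_delta)
  have zero: "emb x = 0 \<longleftrightarrow> x = 0" for x
    using emb_eq_iff[of x 0] by (simp only: emb_0)
  show ?thesis
    unfolding symp_basis_def adj_lin_op commutator_lin_op delta zero ..
qed

lemma commutator_lin_op_mode_sum:
  "commutator (lin_op v) (mode_sum c \<omega>) =
     (\<Sum>i\<in>UNIV. emb (complex_of_real (\<omega> i) * symp_form v (vconj (c i))) * lin_op (c i)
              + emb (complex_of_real (\<omega> i) * symp_form v (c i)) * lin_op (vconj (c i)))"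
proof -
  have "commutator (lin_op v) (emb (complex_of_real (\<omega> i)) * lin_op (vconj (c i)) * lin_op (c i)) =
      emb (complex_of_real (\<omega> i)) * (emb (symp_form v (vconj (c i))) * lin_op (c i)
        + lin_op (vconj (c i)) * emb (symp_form v (c i)))" for i
    by (simp only: mult.assoc commutator_mult_right commutator_lin_op commutator_emb
        mult_zero_left add_0_left)
  moreover have "lin_op (vconj (c i)) * emb (symp_form v (c i)) = emb (symp_form v (c i)) * lin_op (vconj (c i))" for i
    by (rule emb_commute[symmetric])
  ultimately show ?thesis
    unfolding mode_sum_def commutator_sum_right adj_lin_op
    by (simp add: distrib_left emb_mult mult.assoc)
qed

lemma commutator_basis_vec_mode_sum:
  assumes "symp_basis c"
  shows "commutator (lin_op (basis_vec c l)) (mode_sum c \<omega>) =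
           emb (basis_eigenvalue \<omega> l) * lin_op (basis_vec c l)"
proof (cases l)
  case (Inl j)
  have "commutator (lin_op (c j)) (mode_sum c \<omega>) =
      (\<Sum>i\<in>UNIV. if i = j then emb (complex_of_real (\<omega> i)) * lin_op (c i) else 0)"
    unfolding commutator_lin_op_mode_sum
    using assms by (intro sum.cong refl) (simp add: symp_basis_def emb_0)
  then show ?thesis
    using Inl by (simp add: basis_vec_def basis_eigenvalue_def)
next
  case (Inr j)
  have "commutator (lin_op (vconj (c j))) (mode_sum c \<omega>) =
      (\<Sum>i\<in>UNIV. if i = j then emb (complex_of_real (- \<omega> i)) * lin_op (vconj (c i)) else 0)"
    unfolding commutator_lin_op_mode_sum
    by (intro sum.cong refl) (simp add: symp_basis_vconj[OF assms] emb_0)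
  then show ?thesis
    using Inr by (simp add: basis_vec_def basis_eigenvalue_def)
qed

lemma commutator_phi_eq_0_if_basis:
  assumes c: "symp_basis c" and "\<And>l. commutator (lin_op (basis_vec c l)) X = 0"
  shows "commutator (phi p q m) X = 0"
proof -
  have "phi p q m = lin_op (\<Sum>l\<in>UNIV. (dual_basis_matrix c *v axis m 1)$l *s basis_vec c l)"
    using symp_basis_expansion[OF c, of "axis m 1"] lin_op_axis[of m] by simp
  also have "\<dots> = (\<Sum>l\<in>UNIV. emb ((dual_basis_matrix c *v axis m 1)$l) * lin_op (basis_vec c l))"
    by (simp add: lin_op_sum lin_op_scale)
  finally show ?thesis
    by (simp add: commutator_sum_left commutator_emb_mult_left assms(2))
qed

lemma dirac_diagonalizable_imp_symp_eigenbasis: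
  fixes \<mu> \<kappa> \<gamma> :: "real^'n^'n"
  assumes sym: "transpose \<mu> = \<mu>" "transpose \<kappa> = \<kappa>"
    and "dirac_diagonalizable emb adj p q (hamiltonian emb p q \<mu> \<kappa> \<gamma>)"
  shows "\<exists>c \<omega>. symp_basis c \<and> (\<forall>j. heisenberg_matrix \<mu> \<kappa> \<gamma> *v c j = complex_of_real (\<omega> j) *s c j)"
proof -
  obtain d :: "'n \<Rightarrow> 'a" and \<omega> :: "'n \<Rightarrow> real" and C :: real
    where lin: "\<forall>i. \<exists>c. d i = lin_comb emb p q c"
      and ccr: "\<forall>i j. commutator (d i) (adj (d j)) = (if i = j then 1 else 0)"
        "\<forall>i j. commutator (d i) (d j) = 0"
      and H: "hamiltonian emb p q \<mu> \<kappa> \<gamma> =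
        (\<Sum>i\<in>UNIV. emb (of_real (\<omega> i)) * adj (d i) * d i) + emb (of_real C)"
    using assms(3) unfolding dirac_diagonalizable_def by blast
  from lin obtain c' where c': "\<And>i. d i = lin_comb emb p q (c' i)"
    by metis
  define c where "c i = vec_lambda (c' i)" for i
  have d: "d i = lin_op (c i)" for i
    by (simp add: c' c_def lin_comb_eq_lin_op)
  have c: "symp_basis c"
    using ccr by (simp add: symp_basis_iff_commutators d)
  have "lin_op (heisenberg_matrix \<mu> \<kappa> \<gamma> *v c j) = lin_op (complex_of_real (\<omega> j) *s c j)" for j
  proof -
    have "lin_op (heisenberg_matrix \<mu> \<kappa> \<gamma> *v c j) = commutator (lin_op (c j)) (hamiltonian emb p q \<mu> \<kappa> \<gamma>)"
      by (simp add: commutator_lin_op_hamiltonian[OF sym])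
    also have "\<dots> = commutator (lin_op (basis_vec c (Inl j))) (mode_sum c \<omega>)"
      by (simp add: H d mode_sum_def basis_vec_def commutator_add_right commutator_emb)
    also have "\<dots> = lin_op (complex_of_real (\<omega> j) *s c j)"
      using commutator_basis_vec_mode_sum[OF c, of "Inl j" \<omega>]
      by (simp add: basis_vec_def basis_eigenvalue_def lin_op_scale)
    finally show ?thesis .
  qed
  then show ?thesis
    using c by (auto simp: lin_op_inject)
qed

lemma symp_eigenbasis_imp_dirac_diagonalizable:
  fixes \<mu> \<kappa> \<gamma> :: "real^'n^'n"
  assumes sym: "transpose \<mu> = \<mu>" "transpose \<kappa> = \<kappa>"
    and c: "symp_basis c" and eigen: "\<And>j. heisenberg_matrix \<mu> \<kappa> \<gamma> *v c j = complex_of_real (\<omega> j) *s c j"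
  shows "dirac_diagonalizable emb adj p q (hamiltonian emb p q \<mu> \<kappa> \<gamma>)"
proof -
  define N where "N = hamiltonian_coeffs \<mu> \<kappa> \<gamma> - mode_coeffs c \<omega>"
  have HN: "hamiltonian emb p q \<mu> \<kappa> \<gamma> - mode_sum c \<omega> = quad_op N"
    by (simp add: N_def quad_op_diff hamiltonian_eq_quad_op mode_sum_eq_quad_op)
  have "commutator (lin_op (basis_vec c l)) (quad_op N) = 0" for l
  proof -
    have "heisenberg_matrix \<mu> \<kappa> \<gamma> *v basis_vec c l = basis_eigenvalue \<omega> l *s basis_vec c l"
      by (cases l) (simp_all add: basis_vec_def basis_eigenvalue_def eigen heisenberg_matrix_vconj vconj_scale)
    then show ?thesis
      unfolding HN[symmetric] commutator_diff_right commutator_lin_op_hamiltonian[OF sym]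
      by (simp add: commutator_basis_vec_mode_sum[OF c] lin_op_scale)
  qed
  then have "quad_op N = emb (symp_trace N / 2)"
    by (intro quad_op_antisym quad_op_central_antisym commutator_phi_eq_0_if_basis[OF c])
  moreover have "herm_form (c i) (c i) = -1" for i
    using symp_basis_vconj[OF c] by (simp add: herm_form_def)
  then have "symp_trace N = complex_of_real (\<Sum>i\<in>UNIV. \<omega> i)"
    by (simp add: N_def symp_trace_diff symp_trace_hamiltonian_coeffs[OF sym] symp_trace_mode_coeffs
        sum_negf)
  ultimately have "hamiltonian emb p q \<mu> \<kappa> \<gamma> = mode_sum c \<omega> + emb (of_real ((\<Sum>i\<in>UNIV. \<omega> i) / 2))"
    using HN by (simp add: diff_eq_eq add.commute)
  moreover have "lin_op (c i) = lin_comb emb p q (vec_nth (c i))" for i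
    by (simp add: lin_comb_eq_lin_op)
  ultimately show ?thesis
    using c unfolding dirac_diagonalizable_def symp_basis_iff_commutators mode_sum_def
    by (intro exI[of _ "\<lambda>i. lin_op (c i)"] exI[of _ \<omega>] exI[of _ "sum \<omega> UNIV / 2"]) blast
qed

lemma dirac_diagonalizable_hamiltonian_iff:
  fixes \<mu> \<kappa> \<gamma> :: "real^'n^'n"
  assumes "transpose \<mu> = \<mu>" "transpose \<kappa> = \<kappa>"
  shows "dirac_diagonalizable emb adj p q (hamiltonian emb p q \<mu> \<kappa> \<gamma>) \<longleftrightarrow>
    (\<exists>c \<omega>. symp_basis c \<and> (\<forall>j. heisenberg_matrix \<mu> \<kappa> \<gamma> *v c j = complex_of_real (\<omega> j) *s c j))"
  using dirac_diagonalizable_imp_symp_eigenbasis[OF assms] symp_eigenbasis_imp_dirac_diagonalizable[OF assms]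
  by blast

end

lemma physically_diagonalizable_dynamic_matrix_iff:
  fixes \<mu> \<kappa> \<gamma> :: "real^('n::finite)^'n"
  assumes "transpose \<mu> = \<mu>" "transpose \<kappa> = \<kappa>"
  shows "physically_diagonalizable (dynamic_matrix \<mu> \<kappa> \<gamma>) \<longleftrightarrow>
    (\<exists>c \<omega>. symp_basis c \<and> (\<forall>j. heisenberg_matrix \<mu> \<kappa> \<gamma> *v c j = complex_of_real (\<omega> j) *s c j))"
  using physically_diagonalizable_imp_symp_eigenbasis[OF assms] symp_eigenbasis_imp_physically_diagonalizable
  by blast

theorem theorem5:
  fixes emb :: "complex \<Rightarrow> 'a::ring_1" and adj :: "'a \<Rightarrow> 'a"
    and p q :: "'n::finite \<Rightarrow> 'a"
    and \<mu> \<kappa> \<gamma> :: "real^'n^'n"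
  assumes "star_algebra emb adj"
    and "canonical_pq emb adj p q"
    and "transpose \<mu> = \<mu>" and "transpose \<kappa> = \<kappa>"
  shows "dirac_diagonalizable emb adj p q (hamiltonian emb p q \<mu> \<kappa> \<gamma>)
         \<longleftrightarrow> physically_diagonalizable (dynamic_matrix \<mu> \<kappa> \<gamma>)"
proof -
  interpret ccr_algebra emb adj p q
    using assms(1,2) by unfold_locales
  show ?thesis
    by (simp only: dirac_diagonalizable_hamiltonian_iff[OF assms(3,4)]
        physically_diagonalizable_dynamic_matrix_iff[OF assms(3,4)])
qed

end
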